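(* Let $V$ be a complex vector space of dimension $k\ge2$, with basis $e_1,\dots,e_k$ and dual basis $\alpha_1,\dots,\alpha_k$. Let $$T_k=\sum_{1\le i<j\le k}\big(\alpha_i\otimes\alpha_j-\alpha_j\otimes\alpha_i\big)\otimes(e_i\wedge e_j)\in V^*\otimes V^*\otimes\Lambda^2V.$$ Then $$\underline{R}(T_k)\ge\left\lceil\frac{k^2}{2}\right\rceil=\binom{k}{2}+\left\lceil\frac{k}{2}\right\rceil.$$
   Context: The border rank $\underline{R}(T)$ is the smallest $r$ such that $T$ is a limit of sums of $r$ rank-one tensors $a\otimes b\otimes c$. *)

theory Defs
  imports "HOL-Analysis.Analysis"
begin

text \<open>A tensor in A (x) B (x) C with respect to fixed bases indexed by finite sets
  I, J, K is its coordinate function; coordinates outside I x J x K are ignored.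
  The space is finite dimensional, so its (unique Hausdorff vector-space) topology is
  coordinatewise convergence.\<close>

definition rank_one_sum ::
  "nat \<Rightarrow> (nat \<Rightarrow> 'i \<Rightarrow> complex) \<Rightarrow> (nat \<Rightarrow> 'j \<Rightarrow> complex) \<Rightarrow> (nat \<Rightarrow> 'k \<Rightarrow> complex)
     \<Rightarrow> 'i \<Rightarrow> 'j \<Rightarrow> 'k \<Rightarrow> complex" where
  "rank_one_sum r a b c = (\<lambda>i j p. \<Sum>l<r. a l i * b l j * c l p)"

definition border_rank_le ::
  "'i set \<Rightarrow> 'j set \<Rightarrow> 'k set \<Rightarrow> ('i \<Rightarrow> 'j \<Rightarrow> 'k \<Rightarrow> complex) \<Rightarrow> nat \<Rightarrow> bool" where
  "border_rank_le I J K T r \<longleftrightarrow>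
     (\<exists>a b c. \<forall>i\<in>I. \<forall>j\<in>J. \<forall>p\<in>K.
        ((\<lambda>n. rank_one_sum r (a n) (b n) (c n) i j p) \<longlongrightarrow> T i j p) sequentially)"

definition border_rank ::
  "'i set \<Rightarrow> 'j set \<Rightarrow> 'k set \<Rightarrow> ('i \<Rightarrow> 'j \<Rightarrow> 'k \<Rightarrow> complex) \<Rightarrow> nat" where
  "border_rank I J K T = (LEAST r. border_rank_le I J K T r)"

text \<open>The tensor T_k in V* (x) V* (x) Lambda^2 V, V = C^k with basis e_0..e_{k-1},
  dual basis alpha_i, and Lambda^2 V with basis e_p wedge e_q, p < q, indexed by (p,q).\<close>

definition wedge_index :: "nat \<Rightarrow> (nat \<times> nat) set" where
  "wedge_index k = {(p, q). p < q \<and> q < k}"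

definition T_tensor :: "nat \<Rightarrow> nat \<Rightarrow> (nat \<times> nat) \<Rightarrow> complex" where
  "T_tensor i j pq = (if (i, j) = pq then 1 else if (j, i) = pq then -1 else 0)"

end

theory Submission
  imports Defs "Jordan_Normal_Form.Determinant"
begin

(* The Koszul flattening of X is the matrix with rows indexed by (j, e_p wedge e_q)
   and columns by (x, beta) whose entries, for a rank-one tensor a (x) b (x) c, are
   b_j c_beta (a_p e_q - a_q e_p)_x. Since a_p e_q - a_q e_p is orthogonal to a, a rank-one
   tensor has a flattening of rank at most k - 1, so a sum of r of them has rank at most
   r (k - 1); this passes to limits because a nonzero maximal minor persists along the
   approximating sequence. For T_k the flattening is a square matrix of size k * (k choose 2)
   and it is injective: a kernel vector is a 3-tensor symmetric in its first two and
   antisymmetric in its last two indices, hence zero. So k * (k choose 2) <= r (k - 1),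
   i.e. r >= k^2 / 2. *)

lemma two_mult_choose_two: "2 * (n choose 2) = n * (n - 1)"
  by (cases n) (simp_all add: choose_two)

lemma ceiling_square_half: "\<lceil>real k ^ 2 / 2\<rceil> = int (k choose 2) + \<lceil>real k / 2\<rceil>"
proof -
  have "real k ^ 2 / 2 = real k / 2 + of_int (int (k choose 2))"
    using arg_cong[OF two_mult_choose_two[of k], of real]
    by (cases k) (simp_all add: power2_eq_square algebra_simps)
  then show ?thesis
    by (simp only: ceiling_add_of_int)
qed

lemma finite_wedge_index: "finite (wedge_index k)"
  by (rule finite_subset[of _ "{..<k} \<times> {..<k}"]) (auto simp: wedge_index_def)

lemma card_wedge_index: "card (wedge_index k) = k choose 2"
proof (induction k)
  case 0
  then show ?case by (simp add: wedge_index_def)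
next
  case (Suc k)
  have "wedge_index (Suc k) = wedge_index k \<union> (\<lambda>p. (p, k)) ` {..<k}"
    by (auto simp: wedge_index_def less_Suc_eq)
  moreover have "wedge_index k \<inter> (\<lambda>p. (p, k)) ` {..<k} = {}"
    by (auto simp: wedge_index_def)
  ultimately have "card (wedge_index (Suc k)) = card (wedge_index k) + k"
    by (simp add: card_Un_disjoint finite_wedge_index card_image inj_on_def)
  then show ?case
    using Suc by (simp add: numeral_2_eq_2)
qed

lemma border_rank_le_prod_card: "border_rank_le {..<m} {..<n} K T (m * n)"
proof -
  define a where "a l i = (if i = l div n then 1 else 0 :: complex)" for l i :: nat
  define b where "b l j = (if j = l mod n then 1 else 0 :: complex)" for l j :: nat
  define c where "c l = T (l div n) (l mod n)" for l
  have "rank_one_sum (m * n) a b c i j p = T i j p" if "i < m" "j < n" for i j p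
  proof -
    have "i * n + j < Suc i * n"
      using that by simp
    also have "\<dots> \<le> m * n"
      using that by (intro mult_le_mono1) simp
    finally have "i * n + j < m * n" .
    moreover have "a l i * b l j * c l p = (if l = i * n + j then T i j p else 0)" for l
      using that by (auto simp: a_def b_def c_def)
    ultimately show ?thesis
      unfolding rank_one_sum_def by simp
  qed
  then show ?thesis
    unfolding border_rank_le_def by (intro exI[of _ "\<lambda>_. a"] exI[of _ "\<lambda>_. b"] exI[of _ "\<lambda>_. c"]) simp
qed

lemma border_rank_le_border_rank:
  "border_rank_le I J K T r \<Longrightarrow> border_rank_le I J K T (border_rank I J K T)"
  unfolding border_rank_def by (rule LeastI)

lemma det_eq_0_if_zero_row:
  fixes A :: "'a::comm_ring_1 mat"
  assumes "A \<in> carrier_mat n n" "i < n" "\<And>j. j < n \<Longrightarrow> A $$ (i, j) = 0"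
  shows "det A = 0"
proof -
  have "A = mat\<^sub>r n n (\<lambda>i'. if i' = i then 0\<^sub>v n else row A i')"
    using assms by (intro eq_matI) auto
  also have "det \<dots> = 0"
    using assms by (intro det_row_0) auto
  finally show ?thesis .
qed

lemma det_sum_of_products_eq_0:
  fixes u w :: "'t \<Rightarrow> nat \<Rightarrow> 'a::comm_ring_1"
  assumes "finite S" "card S < n"
  shows "det (mat n n (\<lambda>(i, j). \<Sum>t\<in>S. u t i * w t j)) = 0"
proof -
  obtain g where g: "bij_betw g {0..<card S} S"
    using ex_bij_betw_nat_finite[OF assms(1)] by blast
  define P where "P = mat n n (\<lambda>(i, s). if s < card S then u (g s) i else 0)"
  define Q where "Q = mat n n (\<lambda>(s, j). if s < card S then w (g s) j else 0)"
  have "mat n n (\<lambda>(i, j). \<Sum>t\<in>S. u t i * w t j) = P * Q"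
  proof (rule eq_matI)
    fix i j assume "i < dim_row (P * Q)" "j < dim_col (P * Q)"
    then have "(P * Q) $$ (i, j) = (\<Sum>s\<in>{0..<n}. if s < card S then u (g s) i * w (g s) j else 0)"
      by (auto simp: P_def Q_def scalar_prod_def intro: sum.cong)
    also have "\<dots> = (\<Sum>s\<in>{0..<card S}. u (g s) i * w (g s) j)"
      using assms(2) by (intro sum.mono_neutral_cong_right) auto
    also have "\<dots> = (\<Sum>t\<in>S. u t i * w t j)"
      by (rule sum.reindex_bij_betw[OF g])
    finally show "mat n n (\<lambda>(i, j). \<Sum>t\<in>S. u t i * w t j) $$ (i, j) = (P * Q) $$ (i, j)"
      using \<open>i < dim_row (P * Q)\<close> \<open>j < dim_col (P * Q)\<close> by (simp add: P_def Q_def)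
  qed (simp_all add: P_def Q_def)
  moreover have "det Q = 0"
    using assms(2) by (intro det_eq_0_if_zero_row[of Q n "n - 1"]) (auto simp: Q_def)
  ultimately show ?thesis
    using det_mult[of P n Q] by (simp add: P_def Q_def)
qed

lemma det_sum_of_product_sums_eq_0:
  fixes u w :: "'l \<Rightarrow> 't \<Rightarrow> nat \<Rightarrow> 'a::comm_ring_1"
  assumes "finite L" "\<And>l. l \<in> L \<Longrightarrow> finite (S l)" "(\<Sum>l\<in>L. card (S l)) < n"
  shows "det (mat n n (\<lambda>(i, j). \<Sum>l\<in>L. \<Sum>t\<in>S l. u l t i * w l t j)) = 0"
proof -
  have "(\<lambda>(i, j). \<Sum>l\<in>L. \<Sum>t\<in>S l. u l t i * w l t j)
      = (\<lambda>(i, j). \<Sum>lt\<in>Sigma L S. case_prod u lt i * case_prod w lt j)"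
    using assms(1,2) by (simp add: sum.Sigma split_def)
  moreover have "card (Sigma L S) < n"
    using assms by simp
  ultimately show ?thesis
    using assms(1,2) by (simp add: det_sum_of_products_eq_0)
qed

lemma tendsto_det:
  fixes X :: "'b \<Rightarrow> 'a::real_normed_field mat"
  assumes "\<And>x. X x \<in> carrier_mat n n" "Y \<in> carrier_mat n n"
    and "\<And>i j. i < n \<Longrightarrow> j < n \<Longrightarrow> ((\<lambda>x. X x $$ (i, j)) \<longlongrightarrow> Y $$ (i, j)) F"
  shows "((\<lambda>x. det (X x)) \<longlongrightarrow> det Y) F"
  unfolding det_def'[OF assms(1)] det_def'[OF assms(2)]
proof (intro tendsto_sum tendsto_mult tendsto_const tendsto_prod)
  fix p i assume "p \<in> {p. p permutes {0..<n}}" "i \<in> {0..<n}"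
  then show "((\<lambda>x. X x $$ (i, p i)) \<longlongrightarrow> Y $$ (i, p i)) F"
    using assms(3) permutes_in_image by fastforce
qed

definition contract_wedge :: "(nat \<Rightarrow> 'a::ring) \<Rightarrow> nat \<Rightarrow> nat \<Rightarrow> nat \<Rightarrow> 'a" where
  "contract_wedge a p q x = (if x = q then a p else 0) - (if x = p then a q else 0)"

lemma sum_mult_contract_wedge:
  fixes a :: "nat \<Rightarrow> 'a::comm_ring"
  assumes "p < k" "q < k"
  shows "(\<Sum>x<k. a x * contract_wedge a p q x) = 0"
proof -
  have "a x * contract_wedge a p q x = (if x = q then a q * a p else 0) - (if x = p then a p * a q else 0)" for x
    by (simp add: contract_wedge_def right_diff_distrib)
  then show ?thesis
    using assms by (simp add: sum_subtractf mult.commute)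
qed

lemma expansion_in_hyperplane:
  fixes a w :: "nat \<Rightarrow> 'a::field"
  assumes "m < k" "a m \<noteq> 0" "(\<Sum>y<k. a y * w y) = 0" "x < k"
  shows "w x = (\<Sum>y\<in>{..<k} - {m}. w y * ((if x = y then 1 else 0) - (if x = m then a y / a m else 0)))"
proof (cases "x = m")
  case True
  have "a m * w m + (\<Sum>y\<in>{..<k} - {m}. a y * w y) = 0"
    using assms(1,3) by (simp add: sum.remove)
  moreover have "(\<Sum>y\<in>{..<k} - {m}. w y * ((if m = y then 1 else 0) - a y / a m))
      = - (\<Sum>y\<in>{..<k} - {m}. a y * w y) / a m"
    by (auto simp: sum_divide_distrib simp flip: sum_negf intro!: sum.cong)
  ultimately show ?thesis
    using True assms(2) by (simp add: field_simps add_eq_0_iff)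
next
  case False
  then have "(\<Sum>y\<in>{..<k} - {m}. w y * ((if x = y then 1 else 0) - (if x = m then a y / a m else 0)))
      = (\<Sum>y\<in>{..<k} - {m}. if x = y then w y else 0)"
    by (intro sum.cong) auto
  then show ?thesis
    using False assms(4) by simp
qed

lemma contract_wedge_expansion:
  fixes a :: "nat \<Rightarrow> 'a::field"
  shows "\<exists>S e. S \<subseteq> {..<k} \<and> card S \<le> k - 1 \<and> (\<forall>p<k. \<forall>q<k. \<forall>x<k.
           contract_wedge a p q x = (\<Sum>y\<in>S. contract_wedge a p q y * e y x))"
proof (cases "\<exists>m<k. a m \<noteq> 0")
  case True
  then obtain m where "m < k" "a m \<noteq> 0" by blast
  then show ?thesis
    using expansion_in_hyperplane[OF _ _ sum_mult_contract_wedge]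
    by (intro exI[of _ "{..<k} - {m}"]
        exI[of _ "\<lambda>y x. (if x = y then 1 else 0) - (if x = m then a y / a m else 0)"]) auto
next
  case False
  then show ?thesis
    by (intro exI[of _ "{}"]) (simp add: contract_wedge_def)
qed

lemma contract_wedge_expansions:
  fixes a :: "'l \<Rightarrow> nat \<Rightarrow> 'a::field"
  shows "\<exists>S e. \<forall>l. S l \<subseteq> {..<k} \<and> card (S l) \<le> k - 1 \<and> (\<forall>p<k. \<forall>q<k. \<forall>x<k.
           contract_wedge (a l) p q x = (\<Sum>y\<in>S l. contract_wedge (a l) p q y * e l y x))"
proof -
  have "\<forall>l. \<exists>S e. S \<subseteq> {..<k} \<and> card S \<le> k - 1 \<and> (\<forall>p<k. \<forall>q<k. \<forall>x<k.
      contract_wedge (a l) p q x = (\<Sum>y\<in>S. contract_wedge (a l) p q y * e y x))"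
    by (intro allI contract_wedge_expansion)
  then obtain S where "\<forall>l. \<exists>e. S l \<subseteq> {..<k} \<and> card (S l) \<le> k - 1 \<and> (\<forall>p<k. \<forall>q<k. \<forall>x<k.
      contract_wedge (a l) p q x = (\<Sum>y\<in>S l. contract_wedge (a l) p q y * e y x))"
    by (auto dest: choice)
  from choice[OF this] show ?thesis
    by blast
qed

fun koszul_flattening :: "(nat \<Rightarrow> nat \<Rightarrow> nat \<times> nat \<Rightarrow> 'a::ab_group_add)
    \<Rightarrow> nat \<times> nat \<times> nat \<Rightarrow> nat \<times> nat \<times> nat \<Rightarrow> 'a" where
  "koszul_flattening X (j, p, q) (x, \<beta>) = (if x = q then X p j \<beta> else 0) - (if x = p then X q j \<beta> else 0)"

lemma koszul_flattening_rank_one_sum: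
  "koszul_flattening (rank_one_sum r a b c) (j, p, q) (x, \<beta>)
     = (\<Sum>l<r. b l j * contract_wedge (a l) p q x * c l \<beta>)"
proof -
  have "b l j * contract_wedge (a l) p q x * c l \<beta>
      = (if x = q then a l p * b l j * c l \<beta> else 0) - (if x = p then a l q * b l j * c l \<beta> else 0)" for l
    by (simp add: contract_wedge_def algebra_simps)
  then show ?thesis
    by (simp add: rank_one_sum_def sum_subtractf)
qed

definition koszul_matrix :: "(nat \<Rightarrow> nat \<times> nat \<times> nat) \<Rightarrow> nat
    \<Rightarrow> (nat \<Rightarrow> nat \<Rightarrow> nat \<times> nat \<Rightarrow> 'a::ab_group_add) \<Rightarrow> 'a mat" where
  "koszul_matrix h n X = mat n n (\<lambda>(i, i'). koszul_flattening X (h i) (h i'))"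

lemma koszul_matrix_carrier: "koszul_matrix h n X \<in> carrier_mat n n"
  by (simp add: koszul_matrix_def)

lemma det_koszul_matrix_rank_one_sum:
  assumes h: "\<And>i. i < n \<Longrightarrow> h i \<in> {..<k} \<times> wedge_index k" and small: "r * (k - 1) < n"
  shows "det (koszul_matrix h n (rank_one_sum r a b c)) = 0"
proof -
  obtain S e where "\<forall>l. S l \<subseteq> {..<k} \<and> card (S l) \<le> k - 1 \<and> (\<forall>p<k. \<forall>q<k. \<forall>x<k.
      contract_wedge (a l) p q x = (\<Sum>y\<in>S l. contract_wedge (a l) p q y * e l y x))"
    using contract_wedge_expansions[where a = a and k = k] by blast
  then have S: "\<And>l. S l \<subseteq> {..<k}" "\<And>l. card (S l) \<le> k - 1"
    and expand: "\<And>l p q x. p < k \<Longrightarrow> q < k \<Longrightarrow> x < k \<Longrightarrow>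
      contract_wedge (a l) p q x = (\<Sum>y\<in>S l. contract_wedge (a l) p q y * e l y x)"
    by blast+
  define u where "u l y i = (case h i of (j, p, q) \<Rightarrow> b l j * contract_wedge (a l) p q y)" for l y i
  define w where "w l y i = (case h i of (x, \<beta>) \<Rightarrow> e l y x * c l \<beta>)" for l y i
  have "koszul_matrix h n (rank_one_sum r a b c)
      = mat n n (\<lambda>(i, i'). \<Sum>l<r. \<Sum>y\<in>S l. u l y i * w l y i')"
  proof (rule eq_matI)
    fix i i' assume "i < dim_row (mat n n (\<lambda>(i, i'). \<Sum>l<r. \<Sum>y\<in>S l. u l y i * w l y i'))"
      and "i' < dim_col (mat n n (\<lambda>(i, i'). \<Sum>l<r. \<Sum>y\<in>S l. u l y i * w l y i'))"
    then have "i < n" "i' < n" by simp_all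
    obtain j p q x \<beta> where hi: "h i = (j, p, q)" and hi': "h i' = (x, \<beta>)"
      by (metis prod_cases3 surj_pair)
    have "p < k" "q < k" "x < k"
      using h[OF \<open>i < n\<close>] h[OF \<open>i' < n\<close>] hi hi' by (auto simp: wedge_index_def)
    then have "koszul_flattening (rank_one_sum r a b c) (h i) (h i')
        = (\<Sum>l<r. b l j * (\<Sum>y\<in>S l. contract_wedge (a l) p q y * e l y x) * c l \<beta>)"
      unfolding hi hi' koszul_flattening_rank_one_sum using expand by simp
    also have "\<dots> = (\<Sum>l<r. \<Sum>y\<in>S l. u l y i * w l y i')"
      using hi hi' by (simp add: u_def w_def sum_distrib_left sum_distrib_right algebra_simps)
    finally show "koszul_matrix h n (rank_one_sum r a b c) $$ (i, i')
        = mat n n (\<lambda>(i, i'). \<Sum>l<r. \<Sum>y\<in>S l. u l y i * w l y i') $$ (i, i')"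
      using \<open>i < n\<close> \<open>i' < n\<close> by (simp add: koszul_matrix_def)
  qed (simp_all add: koszul_matrix_def)
  moreover have "(\<Sum>l<r. card (S l)) < n"
    using sum_bounded_above[of "{..<r}" "\<lambda>l. card (S l)" "k - 1"] S(2) small by simp
  moreover have "finite (S l)" for l
    using S(1) by (rule finite_subset) simp
  ultimately show ?thesis
    by (simp add: det_sum_of_product_sums_eq_0)
qed

definition antisym_extension :: "(nat \<times> nat \<Rightarrow> 'a::ab_group_add) \<Rightarrow> nat \<Rightarrow> nat \<Rightarrow> 'a" where
  "antisym_extension f p q = (if p < q then f (p, q) else if q < p then - f (q, p) else 0)"

lemma sum_T_tensor_mult:
  assumes "i < k" "j < k"
  shows "(\<Sum>\<beta>\<in>wedge_index k. T_tensor i j \<beta> * f \<beta>) = antisym_extension f i j"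
proof -
  have "T_tensor i j \<beta> * f \<beta> = (if \<beta> = (i, j) then f \<beta> else 0) - (if \<beta> = (j, i) then f \<beta> else 0)"
    if \<beta>: "\<beta> \<in> wedge_index k" for \<beta>
  proof -
    obtain p q where "\<beta> = (p, q)" "p < q"
      using \<beta> by (auto simp: wedge_index_def)
    then show ?thesis
      by (auto simp: T_tensor_def)
  qed
  then have "(\<Sum>\<beta>\<in>wedge_index k. T_tensor i j \<beta> * f \<beta>)
      = (\<Sum>\<beta>\<in>wedge_index k. (if \<beta> = (i, j) then f \<beta> else 0) - (if \<beta> = (j, i) then f \<beta> else 0))"
    by (rule sum.cong[OF refl])
  also have "\<dots> = (if (i, j) \<in> wedge_index k then f (i, j) else 0) - (if (j, i) \<in> wedge_index k then f (j, i) else 0)"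
    by (simp add: sum_subtractf finite_wedge_index)
  also have "\<dots> = antisym_extension f i j"
    using assms by (auto simp: antisym_extension_def wedge_index_def)
  finally show ?thesis .
qed

lemma sym_antisym_eq_0:
  fixes W :: "'i \<Rightarrow> 'i \<Rightarrow> 'i \<Rightarrow> 'a::field_char_0"
  assumes sym: "\<And>x y z. x \<in> I \<Longrightarrow> y \<in> I \<Longrightarrow> z \<in> I \<Longrightarrow> W x y z = W y x z"
    and antisym: "\<And>x y z. x \<in> I \<Longrightarrow> y \<in> I \<Longrightarrow> z \<in> I \<Longrightarrow> W x y z = - W x z y"
    and "x \<in> I" "y \<in> I" "z \<in> I"
  shows "W x y z = 0"
proof -
  have "W x y z = W y x z" using sym[of x y z] assms(3-5) by simp
  also have "\<dots> = - W y z x" using antisym[of y x z] assms(3-5) by simp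
  also have "\<dots> = - W z y x" using sym[of y z x] assms(3-5) by simp
  also have "\<dots> = W z x y" using antisym[of z y x] assms(3-5) by simp
  also have "\<dots> = W x z y" using sym[of z x y] assms(3-5) by simp
  also have "\<dots> = - W x y z" using antisym[of x z y] assms(3-5) by simp
  finally have "2 * W x y z = 0"
    by (metis mult_2 add.right_inverse)
  then show ?thesis by simp
qed

lemma koszul_flattening_T_tensor_injective:
  assumes kernel: "\<And>R. R \<in> {..<k} \<times> wedge_index k \<Longrightarrow>
      (\<Sum>d\<in>{..<k} \<times> wedge_index k. koszul_flattening T_tensor R d * V d) = 0"
    and "d \<in> {..<k} \<times> wedge_index k"
  shows "V d = 0"
proof -
  define W where "W x = antisym_extension (\<lambda>\<beta>. V (x, \<beta>))" for x
  have row: "(\<Sum>d\<in>{..<k} \<times> wedge_index k. koszul_flattening T_tensor (j, p, q) d * V d) = W q p j - W p q j"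
    if "j < k" "p < k" "q < k" for j p q
  proof -
    have "(\<Sum>d\<in>{..<k} \<times> wedge_index k. koszul_flattening T_tensor (j, p, q) d * V d)
        = (\<Sum>x<k. \<Sum>\<beta>\<in>wedge_index k. koszul_flattening T_tensor (j, p, q) (x, \<beta>) * V (x, \<beta>))"
      by (rule sum.cartesian_product')
    also have "\<dots> = (\<Sum>x<k. (if x = q then \<Sum>\<beta>\<in>wedge_index k. T_tensor p j \<beta> * V (x, \<beta>) else 0)
            - (if x = p then \<Sum>\<beta>\<in>wedge_index k. T_tensor q j \<beta> * V (x, \<beta>) else 0))"
      by (intro sum.cong refl) (simp add: left_diff_distrib sum_subtractf)
    also have "\<dots> = W q p j - W p q j"
      using that by (simp add: sum_subtractf sum_T_tensor_mult W_def)
    finally show ?thesis .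
  qed
  have W_eq_0: "W x y z = 0" if "x < k" "y < k" "z < k" for x y z
  proof (rule sym_antisym_eq_0[where I = "{..<k}"])
    show "W x y z = W y x z" if "x \<in> {..<k}" "y \<in> {..<k}" "z \<in> {..<k}" for x y z
    proof -
      have "W q p j = W p q j" if "j < k" "p < q" "q < k" for j p q
        using row[of j p q] kernel[of "(j, p, q)"] that by (simp add: wedge_index_def)
      then show ?thesis
        using that by (cases x y rule: linorder_cases) auto
    qed
    show "W x y z = - W x z y" for x y z
      by (auto simp: W_def antisym_extension_def)
  qed (use that in auto)
  obtain x p q where "d = (x, p, q)" "x < k" "p < q" "q < k"
    using assms(2) by (auto simp: wedge_index_def)
  then show ?thesis
    using W_eq_0[of x p q] by (simp add: W_def antisym_extension_def)
qed

lemma det_koszul_matrix_T_tensor_neq_0: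
  assumes h: "bij_betw h {0..<n} ({..<k} \<times> wedge_index k)"
  shows "det (koszul_matrix h n T_tensor) \<noteq> 0"
proof
  assume "det (koszul_matrix h n T_tensor) = 0"
  then obtain v where v: "v \<in> carrier_vec n" "v \<noteq> 0\<^sub>v n" "koszul_matrix h n T_tensor *\<^sub>v v = 0\<^sub>v n"
    using det_0_iff_vec_prod_zero[OF koszul_matrix_carrier] by blast
  define V where "V d = v $ inv_into {0..<n} h d" for d
  have V_h: "V (h i) = v $ i" if "i < n" for i
    using h that by (simp add: V_def bij_betw_inv_into_left)
  have "(\<Sum>d\<in>{..<k} \<times> wedge_index k. koszul_flattening T_tensor R d * V d) = 0"
    if R: "R \<in> {..<k} \<times> wedge_index k" for R
  proof -
    have "R \<in> h ` {0..<n}"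
      using h R by (simp add: bij_betw_def)
    then obtain i where i: "i < n" "h i = R"
      by auto
    have "(\<Sum>d\<in>{..<k} \<times> wedge_index k. koszul_flattening T_tensor R d * V d)
        = (\<Sum>i'\<in>{0..<n}. koszul_flattening T_tensor R (h i') * V (h i'))"
      by (rule sum.reindex_bij_betw[OF h, symmetric])
    also have "\<dots> = (koszul_matrix h n T_tensor *\<^sub>v v) $ i"
      using i v(1) V_h by (auto simp: koszul_matrix_def scalar_prod_def intro!: sum.cong)
    also have "\<dots> = 0"
      using v(3) i by simp
    finally show ?thesis .
  qed
  then have "V d = 0" if "d \<in> {..<k} \<times> wedge_index k" for d
    using that by (rule koszul_flattening_T_tensor_injective)
  then have "v = 0\<^sub>v n"
    using h v(1) V_h by (intro eq_vecI) (auto simp: bij_betw_apply)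
  with v(2) show False ..
qed

lemma koszul_border_rank_bound:
  assumes h: "bij_betw h {0..<n} ({..<k} \<times> wedge_index k)"
    and border: "border_rank_le {..<k} {..<k} (wedge_index k) X r"
    and nonsingular: "det (koszul_matrix h n X) \<noteq> 0"
  shows "n \<le> r * (k - 1)"
proof (rule ccontr)
  assume "\<not> n \<le> r * (k - 1)"
  then have small: "r * (k - 1) < n" by simp
  obtain a b c where conv: "\<And>i j p. i < k \<Longrightarrow> j < k \<Longrightarrow> p \<in> wedge_index k \<Longrightarrow>
      ((\<lambda>m. rank_one_sum r (a m) (b m) (c m) i j p) \<longlonglongrightarrow> X i j p)"
    using border unfolding border_rank_le_def by blast
  have h_range: "h i \<in> {..<k} \<times> wedge_index k" if "i < n" for i
    using h that by (auto simp: bij_betw_apply)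
  have "(\<lambda>m. det (koszul_matrix h n (rank_one_sum r (a m) (b m) (c m))))
      \<longlonglongrightarrow> det (koszul_matrix h n X)"
  proof (rule tendsto_det)
    fix i i' assume "i < n" "i' < n"
    obtain j p q x \<beta> where hi: "h i = (j, p, q)" and hi': "h i' = (x, \<beta>)"
      by (metis prod_cases3 surj_pair)
    have "j < k" "p < k" "q < k" "\<beta> \<in> wedge_index k"
      using h_range[OF \<open>i < n\<close>] h_range[OF \<open>i' < n\<close>] hi hi' by (auto simp: wedge_index_def)
    then show "(\<lambda>m. koszul_matrix h n (rank_one_sum r (a m) (b m) (c m)) $$ (i, i'))
        \<longlonglongrightarrow> koszul_matrix h n X $$ (i, i')"
      using \<open>i < n\<close> \<open>i' < n\<close> hi hi' conv[of p j \<beta>] conv[of q j \<beta>]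
      by (cases "x = q"; cases "x = p") (auto simp: koszul_matrix_def intro!: tendsto_diff tendsto_minus)
  qed (rule koszul_matrix_carrier)+
  moreover have "det (koszul_matrix h n (rank_one_sum r (a m) (b m) (c m))) = 0" for m
    by (rule det_koszul_matrix_rank_one_sum[OF h_range small])
  ultimately have "det (koszul_matrix h n X) = 0"
    by (simp add: LIMSEQ_const_iff)
  with nonsingular show False ..
qed

lemma square_le_twice_border_rank_T_tensor:
  assumes "k \<ge> 2"
  shows "k * k \<le> 2 * border_rank {..<k} {..<k} (wedge_index k) T_tensor"
proof -
  let ?D = "{..<k} \<times> wedge_index k"
  let ?r = "border_rank {..<k} {..<k} (wedge_index k) T_tensor"
  have "finite ?D"
    by (simp add: finite_wedge_index)
  then obtain h where h: "bij_betw h {0..<card ?D} ?D"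
    using ex_bij_betw_nat_finite by blast
  have "card ?D \<le> ?r * (k - 1)"
    using h border_rank_le_border_rank[OF border_rank_le_prod_card] det_koszul_matrix_T_tensor_neq_0[OF h]
    by (rule koszul_border_rank_bound)
  have "(k * k) * (k - 1) = 2 * card ?D"
    using two_mult_choose_two[of k] by (simp add: card_cartesian_product card_wedge_index)
  also have "\<dots> \<le> 2 * (?r * (k - 1))"
    using \<open>card ?D \<le> ?r * (k - 1)\<close> by simp
  finally have "(k * k) * (k - 1) \<le> (2 * ?r) * (k - 1)"
    by (simp only: mult.assoc)
  then show ?thesis
    using assms by simp
qed

theorem corollary1:
  fixes k :: nat
  assumes "k \<ge> 2"
  shows "of_int \<lceil>real k ^ 2 / 2\<rceil> \<le> real (border_rank {..<k} {..<k} (wedge_index k) T_tensor)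
       \<and> \<lceil>real k ^ 2 / 2\<rceil> = int (k choose 2) + \<lceil>real k / 2\<rceil>"
proof
  let ?r = "border_rank {..<k} {..<k} (wedge_index k) T_tensor"
  have "real (k * k) \<le> real (2 * ?r)"
    using square_le_twice_border_rank_T_tensor[OF assms] by (simp only: of_nat_le_iff)
  then have "\<lceil>real k ^ 2 / 2\<rceil> \<le> int ?r"
    by (simp add: ceiling_le_iff power2_eq_square)
  then show "of_int \<lceil>real k ^ 2 / 2\<rceil> \<le> real ?r"
    by linarith
next
  show "\<lceil>real k ^ 2 / 2\<rceil> = int (k choose 2) + \<lceil>real k / 2\<rceil>"
    by (rule ceiling_square_half)
qed

end
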